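(* Let $A \in \mathcal{C}_n$ and let $I \subset \{1,\dots,n\}$ be an index set such that the principal submatrix $A_I$ is positive definite. Let $u^1,\dots,u^m$ be zeros of $A$ such that for each $l=1,\dots,m$ the set $\operatorname{Supp}(u^l)\setminus I = \{k^l\}$ consists of exactly one element, and normalize $u^l$ so that $u^l_{k^l}=1$. Suppose the normalized zeros $u^1,\dots,u^m$ are mutually different, and suppose that $\operatorname{Supp}(u^r_I) \subset \operatorname{Supp}(u^{r+1}_I)$ for all $r=1,\dots,m-1$. Then the indices $k^1,\dots,k^m$ are mutually different and $u^1,\dots,u^m$ are minimal zeros of $A$. Moreover, if $v$ is a zero of $A$ with $\operatorname{Supp}(v) \subset I \cup \{k^1,\dots,k^m\}$, then $v = \sum_{i=1}^m \alpha_i u^i$ for some nonnegative scalars $\alpha_i$. If in addition $v$ is a minimal zero, then there exist $l \in \{1,\dots,m\}$ and $\alpha>0$ with $v = \alpha u^l$.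
   Context: $\mathcal{C}_n$ denotes the cone of copositive matrices: real symmetric $n\times n$ matrices $A$ with $x^TAx\ge 0$ for all $x\in\mathbb{R}^n_+$. For $A\in\mathcal{C}_n$, a zero of $A$ is a nonzero vector $u\in\mathbb{R}^n_+$ with $u^TAu=0$. The support of $u\in\mathbb{R}^n$ is $\operatorname{Supp}(u)=\{i : u_i\neq 0\}$. A zero $u$ of $A$ is minimal if there is no zero $v$ of $A$ with $\operatorname{Supp}(v)\subsetneq\operatorname{Supp}(u)$. For $I\subset\{1,\dots,n\}$, $A_I=(A_{ij})_{i,j\in I}$ is the principal submatrix and $u_I=(u_i)_{i\in I}$ the subvector. *)

theory Defs
  imports "HOL-Analysis.Analysis"
begin

definition nonneg_vec :: "real^'n \<Rightarrow> bool" where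
  "nonneg_vec x \<longleftrightarrow> (\<forall>i. 0 \<le> x $ i)"

definition copositive :: "real^'n^'n \<Rightarrow> bool" where
  "copositive A \<longleftrightarrow> transpose A = A \<and> (\<forall>x. nonneg_vec x \<longrightarrow> 0 \<le> x \<bullet> (A *v x))"

definition supp :: "real^'n \<Rightarrow> 'n set" where
  "supp x = {i. x $ i \<noteq> 0}"

definition is_zero :: "real^'n^'n \<Rightarrow> real^'n \<Rightarrow> bool" where
  "is_zero A u \<longleftrightarrow> nonneg_vec u \<and> u \<noteq> 0 \<and> u \<bullet> (A *v u) = 0"

definition minimal_zero :: "real^'n^'n \<Rightarrow> real^'n \<Rightarrow> bool" where
  "minimal_zero A u \<longleftrightarrow> is_zero A u \<and> \<not> (\<exists>v. is_zero A v \<and> supp v \<subset> supp u)"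

text \<open>The principal submatrix A_I is positive definite: x_I^T A_I x_I > 0 for every
  nonzero x_I in R^I, vectors in R^I being identified with vectors of R^n vanishing off I.\<close>
definition principal_pos_def :: "real^'n^'n \<Rightarrow> 'n set \<Rightarrow> bool" where
  "principal_pos_def A I \<longleftrightarrow>
     (\<forall>x::real^'n. supp x \<subseteq> I \<and> x \<noteq> 0 \<longrightarrow> 0 < x \<bullet> (A *v x))"

end

theory Submission
  imports Defs
begin

text \<open>For a zero \<open>u\<close> of a copositive matrix, \<open>A u \<ge> 0\<close> with \<open>(A u)\<^sub>i = 0\<close> on the support of
  \<open>u\<close>. Hence \<open>x\<^sup>T A y = 0\<close> for zeros \<open>x, y\<close> with \<open>Supp x \<subseteq> Supp y\<close>, so \<open>x - y\<close> is a zero of the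
  quadratic form; if moreover \<open>x - y\<close> lives on \<open>I\<close>, positive definiteness of \<open>A\<^sub>I\<close> forces \<open>x = y\<close>.
  This uniqueness gives the injectivity of \<open>k\<close> (two zeros with the same outside index are nested by
  the chain condition) and the minimality of every \<open>u\<^sup>l\<close>. For the representation, put
  \<open>c\<^sub>j = v\<^sub>k\<^sub>\<^sub>j\<close> and \<open>w = \<Sum> c\<^sub>j u\<^sup>j\<close>; then \<open>w - v\<close> lives on \<open>I\<close>, and the chain condition gives
  \<open>(u\<^sup>j)\<^sup>T A u\<^sup>l = (A u\<^sup>l)\<^sub>k\<^sub>\<^sub>j\<close> for \<open>j < l\<close>, from which \<open>w\<^sup>T A w \<le> 2 w\<^sup>T A v\<close>, i.e.
  \<open>(w - v)\<^sup>T A (w - v) \<le> 0\<close>, so \<open>v = w\<close>.\<close>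

lemma inner_matrix_sym:
  fixes A :: "real^'n^'n"
  assumes "transpose A = A"
  shows "x \<bullet> (A *v y) = y \<bullet> (A *v x)"
proof -
  have "x \<bullet> (A *v y) = (x v* A) \<bullet> y" by (simp add: dot_lmul_matrix)
  also have "x v* A = A *v x" using vector_transpose_matrix[of x A] assms by simp
  finally show ?thesis by (simp add: inner_commute)
qed

lemma inner_matrix_add_scaleR:
  fixes A :: "real^'n^'n"
  assumes "transpose A = A"
  shows "(x + t *\<^sub>R y) \<bullet> (A *v (x + t *\<^sub>R y))
           = x \<bullet> (A *v x) + 2 * t * (y \<bullet> (A *v x)) + t\<^sup>2 * (y \<bullet> (A *v y))"
  using inner_matrix_sym[OF assms, of x y]
  by (simp add: matrix_vector_right_distrib matrix_vector_mult_scaleR inner_add_left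
      inner_add_right power2_eq_square algebra_simps)

lemma inner_matrix_diff:
  fixes A :: "real^'n^'n"
  assumes "transpose A = A"
  shows "(x - y) \<bullet> (A *v (x - y)) = x \<bullet> (A *v x) - 2 * (x \<bullet> (A *v y)) + y \<bullet> (A *v y)"
  using inner_matrix_add_scaleR[OF assms, of x "-1" y] inner_matrix_sym[OF assms, of x y] by simp

lemma inner_matrix_axis: "axis i 1 \<bullet> (A *v y) = (A *v y) $ i"
  by (simp add: inner_axis')

lemma matrix_vector_mult_axis_nth: "(A *v axis i 1) $ i = (A::real^'n^'n) $ i $ i"
  by (simp add: matrix_vector_mult_basis column_def)

lemma inner_matrix_eq_0:
  fixes A :: "real^'n^'n"
  assumes "\<And>i. x $ i \<noteq> 0 \<Longrightarrow> (A *v y) $ i = 0"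
  shows "x \<bullet> (A *v y) = 0"
proof -
  have summand: "x $ i * (A *v y) $ i = 0" for i using assms[of i] by (cases "x $ i = 0") auto
  show ?thesis by (simp add: inner_vec_def summand)
qed

lemma nonneg_of_quadratic_nonneg:
  fixes a b d :: real
  assumes "0 < d" and "\<And>t. 0 < t \<Longrightarrow> t \<le> d \<Longrightarrow> 0 \<le> 2 * t * a + t\<^sup>2 * b"
  shows "0 \<le> a"
proof (rule ccontr)
  assume "\<not> 0 \<le> a"
  define t where "t = min d (- a / (\<bar>b\<bar> + 1))"
  have "0 < - a / (\<bar>b\<bar> + 1)" using \<open>\<not> 0 \<le> a\<close> by (intro divide_pos_pos) auto
  then have t: "0 < t" "t \<le> d" using assms(1) by (auto simp: t_def)
  have "t * (\<bar>b\<bar> + 1) \<le> - a"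
    using mult_right_mono[of t "- a / (\<bar>b\<bar> + 1)" "\<bar>b\<bar> + 1"] by (simp add: t_def)
  then have "t * \<bar>b\<bar> + t \<le> - a" by (simp add: distrib_left)
  moreover have "t * b \<le> t * \<bar>b\<bar>" using t by (intro mult_left_mono) auto
  ultimately have "2 * a + t * b < 0" using t \<open>\<not> 0 \<le> a\<close> by linarith
  then have "t * (2 * a + t * b) < 0" using t by (simp add: mult_pos_neg)
  with assms(2)[OF t] show False by (simp add: power2_eq_square algebra_simps)
qed

text \<open>Perturbing a zero \<open>u\<close> along the \<open>i\<close>-th axis keeps it nonnegative for \<open>t \<ge> 0\<close>, and for
  \<open>t \<ge> -u\<^sub>i\<close>; the quadratic form along this line is \<open>2 t (A u)\<^sub>i + t\<^sup>2 A\<^sub>i\<^sub>i\<close>.\<close>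
lemma copositive_zero_gradient:
  assumes cop: "copositive A" and u: "is_zero A u"
  shows copositive_zero_gradient_nonneg: "0 \<le> (A *v u) $ i"
    and copositive_zero_gradient_supp: "u $ i \<noteq> 0 \<Longrightarrow> (A *v u) $ i = 0"
proof -
  have sym: "transpose A = A" using cop by (simp add: copositive_def)
  have un: "0 \<le> u $ j" for j using u by (simp add: is_zero_def nonneg_vec_def)
  let ?e = "axis i (1::real)"
  have line: "(u + t *\<^sub>R ?e) \<bullet> (A *v (u + t *\<^sub>R ?e)) = 2 * t * (A *v u) $ i + t\<^sup>2 * A $ i $ i" for t
    using inner_matrix_add_scaleR[OF sym] u by (simp add: is_zero_def inner_matrix_axis matrix_vector_mult_axis_nth)
  have on_line: "0 \<le> 2 * t * (A *v u) $ i + t\<^sup>2 * A $ i $ i" if "- u $ i \<le> t" for t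
  proof -
    have "nonneg_vec (u + t *\<^sub>R ?e)" using un that by (simp add: nonneg_vec_def axis_def)
    with cop show ?thesis by (simp add: copositive_def flip: line)
  qed
  show "0 \<le> (A *v u) $ i"
  proof (rule nonneg_of_quadratic_nonneg[of 1])
    fix t :: real assume "0 < t"
    then show "0 \<le> 2 * t * (A *v u) $ i + t\<^sup>2 * A $ i $ i" using on_line un[of i] by simp
  qed simp
  assume "u $ i \<noteq> 0"
  then have "0 < u $ i" using un[of i] by simp
  have "0 \<le> - (A *v u) $ i"
  proof (rule nonneg_of_quadratic_nonneg[OF \<open>0 < u $ i\<close>])
    fix t assume "0 < t" "t \<le> u $ i"
    then show "0 \<le> 2 * t * - (A *v u) $ i + t\<^sup>2 * A $ i $ i" using on_line[of "- t"] by simp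
  qed
  with \<open>0 \<le> (A *v u) $ i\<close> show "(A *v u) $ i = 0" by simp
qed

lemma principal_pos_def_eq_0:
  assumes "principal_pos_def A I" "supp d \<subseteq> I" "d \<bullet> (A *v d) \<le> 0"
  shows "d = 0"
  using assms unfolding principal_pos_def_def by force

lemma zero_eq_if_supp_subset:
  assumes cop: "copositive A" and pd: "principal_pos_def A I"
    and x: "is_zero A x" and y: "is_zero A y"
    and "supp x \<subseteq> supp y" and "supp (x - y) \<subseteq> I"
  shows "x = y"
proof -
  have sym: "transpose A = A" using cop by (simp add: copositive_def)
  have "x \<bullet> (A *v y) = 0"
    using \<open>supp x \<subseteq> supp y\<close>
    by (intro inner_matrix_eq_0 copositive_zero_gradient_supp[OF cop y]) (auto simp: supp_def)
  with x y have "(x - y) \<bullet> (A *v (x - y)) = 0" by (simp add: inner_matrix_diff[OF sym] is_zero_def)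
  with principal_pos_def_eq_0[OF pd \<open>supp (x - y) \<subseteq> I\<close>] show ?thesis by simp
qed

lemma is_zero_scaleR:
  assumes "is_zero A v" "0 < c"
  shows "is_zero A (c *\<^sub>R v)"
  using assms by (simp add: is_zero_def nonneg_vec_def matrix_vector_mult_scaleR)

lemma supp_scaleR: "c \<noteq> 0 \<Longrightarrow> supp (c *\<^sub>R v) = supp v"
  by (simp add: supp_def)

locale normalized_zeros =
  fixes A :: "real^'n^'n" and I :: "'n set" and m :: nat
    and u :: "nat \<Rightarrow> real^'n" and k :: "nat \<Rightarrow> 'n"
  assumes copositive: "copositive A"
    and pos_def: "principal_pos_def A I"
    and zero: "l \<in> {1..m} \<Longrightarrow> is_zero A (u l)"
    and supp_diff: "l \<in> {1..m} \<Longrightarrow> supp (u l) - I = {k l}"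
    and normalized: "l \<in> {1..m} \<Longrightarrow> u l $ k l = 1"
begin

lemma k_notin: "l \<in> {1..m} \<Longrightarrow> k l \<notin> I"
  using supp_diff by blast

lemma supp_subset: "l \<in> {1..m} \<Longrightarrow> supp (u l) \<subseteq> insert (k l) I"
  using supp_diff by blast

lemma nth_eq_0: "l \<in> {1..m} \<Longrightarrow> i \<notin> I \<Longrightarrow> i \<noteq> k l \<Longrightarrow> u l $ i = 0"
  using supp_subset by (auto simp: supp_def)

lemma nonneg: "l \<in> {1..m} \<Longrightarrow> 0 \<le> u l $ i"
  using zero by (simp add: is_zero_def nonneg_vec_def)

text \<open>A zero \<open>v\<close> with smaller support than \<open>u\<^sup>l\<close> cannot vanish at \<open>k\<^sup>l\<close>, as \<open>A\<^sub>I\<close> has no zeros;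
  rescaled to \<open>v\<^sub>k\<^sub>\<^sub>l = 1\<close> it agrees with \<open>u\<^sup>l\<close> off \<open>I\<close>, hence equals \<open>u\<^sup>l\<close>.\<close>
lemma minimal:
  assumes l: "l \<in> {1..m}"
  shows "minimal_zero A (u l)"
proof -
  have False if v: "is_zero A v" and sub: "supp v \<subset> supp (u l)" for v
  proof (cases "v $ k l = 0")
    case True
    with sub supp_subset[OF l] have "supp v \<subseteq> I" by (auto simp: supp_def)
    with principal_pos_def_eq_0[OF pos_def, of v] v show False by (simp add: is_zero_def)
  next
    case False
    define v' where "v' = (1 / v $ k l) *\<^sub>R v"
    have "0 < v $ k l" using v False by (simp add: is_zero_def nonneg_vec_def order_le_neq_trans)
    then have zero_v': "is_zero A v'" and supp_v': "supp v' = supp v"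
      using v by (simp_all add: v'_def is_zero_scaleR supp_scaleR)
    have "supp (v' - u l) \<subseteq> I"
    proof
      fix i assume i: "i \<in> supp (v' - u l)"
      show "i \<in> I"
      proof (rule ccontr)
        assume "i \<notin> I"
        show False
        proof (cases "i = k l")
          case True
          with i False normalized[OF l] show False by (simp add: supp_def v'_def)
        next
          case False
          with \<open>i \<notin> I\<close> have "u l $ i = 0" by (rule nth_eq_0[OF l])
          with i have "i \<in> supp v'" by (simp add: supp_def)
          with sub supp_v' \<open>u l $ i = 0\<close> show False by (auto simp: supp_def)
        qed
      qed
    qed
    with zero_eq_if_supp_subset[OF copositive pos_def zero_v' zero[OF l]] sub supp_v'
    have "v' = u l" by blast
    with sub supp_v' show False by simp
  qed
  with zero[OF l] show ?thesis by (auto simp: minimal_zero_def)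
qed

end

locale zero_chain = normalized_zeros +
  assumes inj_u: "inj_on u {1..m}"
    and supp_chain: "r \<in> {1..<m} \<Longrightarrow> supp (u r) \<inter> I \<subseteq> supp (u (Suc r)) \<inter> I"
begin

lemma supp_mono: "1 \<le> r \<Longrightarrow> r \<le> s \<Longrightarrow> s \<le> m \<Longrightarrow> supp (u r) \<inter> I \<subseteq> supp (u s) \<inter> I"
  by (rule lift_Suc_mono_le_ivl[where N = "{1..<m}"]) (use supp_chain in auto)

lemma supp_subset_if_k_eq:
  assumes "r \<in> {1..m}" "s \<in> {1..m}" "r \<le> s" "k r = k s"
  shows "supp (u r) \<subseteq> supp (u s)"
proof
  fix i assume "i \<in> supp (u r)"
  with supp_subset[OF assms(1)] consider "i \<in> supp (u r) \<inter> I" | "i = k r" by blast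
  then show "i \<in> supp (u s)"
  proof cases
    case 1
    with supp_mono[of r s] assms show ?thesis by auto
  next
    case 2
    with assms normalized[of s] show ?thesis by (simp add: supp_def)
  qed
qed

lemma inj_k: "inj_on k {1..m}"
proof -
  have "r = s" if rs: "r \<in> {1..m}" "s \<in> {1..m}" "r \<le> s" "k r = k s" for r s
  proof -
    have "u r $ i = u s $ i" if "i \<notin> I" for i
      using rs that nth_eq_0[of r i] nth_eq_0[of s i] normalized[of r] normalized[of s] by metis
    then have "supp (u r - u s) \<subseteq> I" by (auto simp: supp_def)
    with zero_eq_if_supp_subset[OF copositive pos_def zero zero supp_subset_if_k_eq] rs
    have "u r = u s" by blast
    with inj_u rs show "r = s" by (auto dest: inj_onD)
  qed
  then show ?thesis by (metis inj_onI nat_le_linear)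
qed

lemma nth_k: "l \<in> {1..m} \<Longrightarrow> j \<in> {1..m} \<Longrightarrow> u l $ k j = (if l = j then 1 else 0)"
  using normalized nth_eq_0 k_notin inj_k by (metis inj_on_eq_iff)

text \<open>Off \<open>k\<^sup>j\<close>, the support of \<open>u\<^sup>j\<close> lies in that of \<open>u\<^sup>l\<close>, where \<open>A u\<^sup>l\<close> vanishes.\<close>
lemma inner_less:
  assumes j: "j \<in> {1..m}" and l: "l \<in> {1..m}" and "j < l"
  shows "u j \<bullet> (A *v u l) = (A *v u l) $ k j"
proof -
  have "(u j - axis (k j) 1) \<bullet> (A *v u l) = 0"
  proof (rule inner_matrix_eq_0)
    fix i assume "(u j - axis (k j) 1) $ i \<noteq> 0"
    then have "i \<noteq> k j" "u j $ i \<noteq> 0" using normalized[OF j] by (auto simp: axis_def split: if_splits)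
    then have "i \<in> supp (u j) \<inter> I" using nth_eq_0[OF j] by (auto simp: supp_def)
    with supp_mono[of j l] assms have "u l $ i \<noteq> 0" by (auto simp: supp_def)
    then show "(A *v u l) $ i = 0" by (rule copositive_zero_gradient_supp[OF copositive zero[OF l]])
  qed
  then show ?thesis by (simp add: inner_diff_left inner_matrix_axis)
qed

lemma inner_le:
  assumes j: "j \<in> {1..m}" and l: "l \<in> {1..m}"
  shows "u j \<bullet> (A *v u l) \<le> (A *v u l) $ k j + (A *v u j) $ k l"
proof -
  have sym: "transpose A = A" using copositive by (simp add: copositive_def)
  have "0 \<le> (A *v u l) $ k j" "0 \<le> (A *v u j) $ k l"
    using copositive_zero_gradient_nonneg[OF copositive zero] j l by auto
  moreover have "u j \<bullet> (A *v u l) = 0" if "j = l" using zero[OF j] that by (simp add: is_zero_def)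
  ultimately show ?thesis
    using inner_less[OF j l] inner_less[OF l j] inner_matrix_sym[OF sym, of "u j" "u l"]
    by (cases j l rule: linorder_cases) auto
qed

lemma quadratic_form_combination_le:
  assumes c: "\<And>j. j \<in> {1..m} \<Longrightarrow> 0 \<le> c j"
  defines "w \<equiv> \<Sum>l=1..m. c l *\<^sub>R u l"
  shows "w \<bullet> (A *v w) \<le> 2 * (\<Sum>l=1..m. c l * (\<Sum>j=1..m. c j * (A *v u l) $ k j))"
proof -
  have sym: "transpose A = A" using copositive by (simp add: copositive_def)
  have "w \<bullet> (A *v w) = (\<Sum>l=1..m. c l * (u l \<bullet> (A *v w)))"
    unfolding w_def by (simp add: inner_sum_left)
  also have "\<dots> = (\<Sum>l=1..m. c l * (w \<bullet> (A *v u l)))"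
    using inner_matrix_sym[OF sym, of _ w] by presburger
  also have "\<dots> = (\<Sum>l=1..m. \<Sum>j=1..m. c l * c j * (u j \<bullet> (A *v u l)))"
    by (simp add: w_def inner_sum_left sum_distrib_left mult.assoc)
  also have "\<dots> \<le> (\<Sum>l=1..m. \<Sum>j=1..m. c l * c j * ((A *v u l) $ k j + (A *v u j) $ k l))"
    using c by (intro sum_mono mult_left_mono inner_le) auto
  also have "\<dots> = (\<Sum>l=1..m. \<Sum>j=1..m. c l * c j * (A *v u l) $ k j)
                  + (\<Sum>j=1..m. \<Sum>l=1..m. c l * c j * (A *v u j) $ k l)"
    by (simp add: distrib_left sum.distrib, rule sum.swap)
  also have "\<dots> = 2 * (\<Sum>l=1..m. c l * (\<Sum>j=1..m. c j * (A *v u l) $ k j))"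
    by (simp add: sum_distrib_left mult_ac)
  finally show ?thesis .
qed

lemma combination_inner_ge:
  assumes v: "nonneg_vec v"
  shows "(\<Sum>l=1..m. v $ k l * (\<Sum>j=1..m. v $ k j * (A *v u l) $ k j))
           \<le> (\<Sum>l=1..m. v $ k l *\<^sub>R u l) \<bullet> (A *v v)"
proof -
  have sym: "transpose A = A" using copositive by (simp add: copositive_def)
  have "(\<Sum>j=1..m. v $ k j * (A *v u l) $ k j) \<le> v \<bullet> (A *v u l)" if l: "l \<in> {1..m}" for l
  proof -
    have "(\<Sum>j=1..m. v $ k j * (A *v u l) $ k j) = (\<Sum>i\<in>k ` {1..m}. v $ i * (A *v u l) $ i)"
      by (subst sum.reindex[OF inj_k]) simp
    also have "\<dots> \<le> (\<Sum>i\<in>UNIV. v $ i * (A *v u l) $ i)"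
      using v copositive_zero_gradient_nonneg[OF copositive zero[OF l]]
      by (intro sum_mono2) (auto simp: nonneg_vec_def)
    finally show ?thesis by (simp add: inner_vec_def)
  qed
  with v have "(\<Sum>l=1..m. v $ k l * (\<Sum>j=1..m. v $ k j * (A *v u l) $ k j))
                \<le> (\<Sum>l=1..m. v $ k l * (v \<bullet> (A *v u l)))"
    by (intro sum_mono mult_left_mono) (auto simp: nonneg_vec_def)
  also have "\<dots> = (\<Sum>l=1..m. v $ k l *\<^sub>R u l) \<bullet> (A *v v)"
    using inner_matrix_sym[OF sym, of v] by (simp add: inner_sum_left)
  finally show ?thesis .
qed

lemma combination_nth_k:
  "j \<in> {1..m} \<Longrightarrow> (\<Sum>l=1..m. c l *\<^sub>R u l) $ k j = c j"
  by (simp add: nth_k if_distrib cong: if_cong)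

lemma combination_nth_eq_0:
  assumes "i \<notin> I" "i \<notin> k ` {1..m}"
  shows "(\<Sum>l=1..m. c l *\<^sub>R u l) $ i = 0"
proof -
  have "u l $ i = 0" if "l \<in> {1..m}" for l using nth_eq_0[OF that] assms that by blast
  then show ?thesis by simp
qed

lemma zero_eq_combination:
  assumes v: "is_zero A v" and supp_v: "supp v \<subseteq> I \<union> k ` {1..m}"
  shows "v = (\<Sum>l=1..m. v $ k l *\<^sub>R u l)"
proof -
  define w where "w = (\<Sum>l=1..m. v $ k l *\<^sub>R u l)"
  have sym: "transpose A = A" using copositive by (simp add: copositive_def)
  have v_nonneg: "nonneg_vec v" and vv: "v \<bullet> (A *v v) = 0" using v by (auto simp: is_zero_def)
  have "w $ i = v $ i" if "i \<notin> I" for i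
  proof (cases "i \<in> k ` {1..m}")
    case True
    then obtain j where "j \<in> {1..m}" "i = k j" by blast
    then show ?thesis unfolding w_def by (simp only: combination_nth_k)
  next
    case False
    with that supp_v have "v $ i = 0" by (auto simp: supp_def)
    moreover have "w $ i = 0" unfolding w_def using that False by (rule combination_nth_eq_0)
    ultimately show ?thesis by simp
  qed
  then have "supp (w - v) \<subseteq> I" by (auto simp: supp_def)
  moreover have "w \<bullet> (A *v w) \<le> 2 * (w \<bullet> (A *v v))"
    using quadratic_form_combination_le[of "\<lambda>l. v $ k l"] combination_inner_ge[OF v_nonneg]
      v_nonneg by (simp add: w_def nonneg_vec_def)
  then have "(w - v) \<bullet> (A *v (w - v)) \<le> 0" by (simp add: inner_matrix_diff[OF sym] vv)
  ultimately have "w - v = 0" by (rule principal_pos_def_eq_0[OF pos_def])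
  then show ?thesis by (simp add: w_def)
qed

text \<open>A minimal zero in the cone contains the support of every \<open>u\<^sup>l\<close> it uses, hence equals it,
  and then it cannot use any other \<open>u\<^sup>j\<close> because \<open>k\<^sup>j \<notin> Supp u\<^sup>l\<close>.\<close>
lemma minimal_zero_combination_eq_scaleR:
  assumes v: "minimal_zero A v" and c: "\<And>j. j \<in> {1..m} \<Longrightarrow> 0 \<le> c j"
    and v_eq: "v = (\<Sum>j=1..m. c j *\<^sub>R u j)"
  shows "\<exists>l\<in>{1..m}. \<exists>a>0. v = a *\<^sub>R u l"
proof -
  have "v \<noteq> 0" using v by (simp add: minimal_zero_def is_zero_def)
  moreover have "v = 0" if "\<forall>l\<in>{1..m}. c l = 0" unfolding v_eq using that by simp
  ultimately obtain l where l: "l \<in> {1..m}" and "c l \<noteq> 0" by blast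
  then have cl: "0 < c l" using c[OF l] by simp
  have term_le: "c j * u j $ i \<le> v $ i" if "j \<in> {1..m}" for j i
  proof -
    have "c j * u j $ i \<le> (\<Sum>j=1..m. c j * u j $ i)"
      using that c nonneg by (intro member_le_sum mult_nonneg_nonneg) auto
    also have "\<dots> = v $ i" by (simp add: v_eq)
    finally show ?thesis .
  qed
  have "supp (u l) \<subseteq> supp v"
  proof
    fix i assume "i \<in> supp (u l)"
    then have "0 < c l * u l $ i" using cl nonneg[OF l, of i] by (simp add: supp_def)
    with term_le[OF l, of i] show "i \<in> supp v" by (simp add: supp_def)
  qed
  with v zero[OF l] have supp_eq: "supp (u l) = supp v" by (auto simp: minimal_zero_def)
  have c_eq_0: "c j = 0" if j: "j \<in> {1..m} - {l}" for j
  proof -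
    have j_in: "j \<in> {1..m}" using j by blast
    have "u l $ k j = 0" using nth_k[OF l j_in] j by simp
    then have "v $ k j = 0" using supp_eq by (auto simp: supp_def)
    with term_le[OF j_in, of "k j"] normalized[OF j_in] c[OF j_in] show ?thesis by simp
  qed
  have "v = c l *\<^sub>R u l + (\<Sum>j\<in>{1..m} - {l}. c j *\<^sub>R u j)"
    unfolding v_eq by (rule sum.remove[OF _ l]) simp
  also have "(\<Sum>j\<in>{1..m} - {l}. c j *\<^sub>R u j) = 0" by (simp add: c_eq_0)
  finally have "v = c l *\<^sub>R u l" by simp
  with l cl show ?thesis by blast
qed

end

theorem theorem3p12:
  fixes A :: "real^'n^'n" and I :: "'n set" and m :: nat
    and u :: "nat \<Rightarrow> real^'n" and k :: "nat \<Rightarrow> 'n"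
  assumes cop: "copositive A"
    and pd: "principal_pos_def A I"
    and zeros: "\<forall>l\<in>{1..m}. is_zero A (u l)"
    and outside: "\<forall>l\<in>{1..m}. supp (u l) - I = {k l}"
    and normal: "\<forall>l\<in>{1..m}. u l $ k l = 1"
    and distinct: "inj_on u {1..m}"
    and chain: "\<forall>r\<in>{1..<m}. supp (u r) \<inter> I \<subseteq> supp (u (Suc r)) \<inter> I"
  shows "inj_on k {1..m}
    \<and> (\<forall>l\<in>{1..m}. minimal_zero A (u l))
    \<and> (\<forall>v. is_zero A v \<and> supp v \<subseteq> I \<union> k ` {1..m} \<longrightarrow>
          (\<exists>\<alpha>::nat \<Rightarrow> real. (\<forall>i\<in>{1..m}. 0 \<le> \<alpha> i) \<and> v = (\<Sum>i=1..m. \<alpha> i *\<^sub>R u i))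
          \<and> (minimal_zero A v \<longrightarrow> (\<exists>l\<in>{1..m}. \<exists>a>0. v = a *\<^sub>R u l)))"
proof -
  interpret zero_chain A I m u k
    using assms by unfold_locales auto
  have "(\<exists>\<alpha>::nat \<Rightarrow> real. (\<forall>i\<in>{1..m}. 0 \<le> \<alpha> i) \<and> v = (\<Sum>i=1..m. \<alpha> i *\<^sub>R u i))
          \<and> (minimal_zero A v \<longrightarrow> (\<exists>l\<in>{1..m}. \<exists>a>0. v = a *\<^sub>R u l))"
    if v: "is_zero A v" and supp_v: "supp v \<subseteq> I \<union> k ` {1..m}" for v
  proof -
    have coeff_nonneg: "0 \<le> v $ k i" for i using v by (simp add: is_zero_def nonneg_vec_def)
    have v_eq: "v = (\<Sum>i=1..m. v $ k i *\<^sub>R u i)" by (rule zero_eq_combination[OF v supp_v])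
    show ?thesis
    proof (intro conjI impI)
      show "\<exists>\<alpha>::nat \<Rightarrow> real. (\<forall>i\<in>{1..m}. 0 \<le> \<alpha> i) \<and> v = (\<Sum>i=1..m. \<alpha> i *\<^sub>R u i)"
        by (intro exI[of _ "\<lambda>i. v $ k i"] conjI ballI coeff_nonneg v_eq)
      show "\<exists>l\<in>{1..m}. \<exists>a>0. v = a *\<^sub>R u l" if "minimal_zero A v"
        using minimal_zero_combination_eq_scaleR[OF that coeff_nonneg v_eq] .
    qed
  qed
  with inj_k minimal show ?thesis by blast
qed

end
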